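(* Let $\gamma_0:[1,2]\to\mathbf{C}$ be the piecewise affine path with $\gamma_0(1)=-2+i$, $\gamma_0(1.25)=1+i$, $\gamma_0(1.5)=1-i$, $\gamma_0(1.75)=-1-i$, $\gamma_0(2)=-1+2i$, affine on each of the intervals $[1,1.25],[1.25,1.5],[1.5,1.75],[1.75,2]$. Then every continuous path $\gamma:[1,2]\to\mathbf{C}$ with $\sup_{t\in[1,2]}|\gamma(t)-\gamma_0(t)|<1/2$ separates $0$ from $\infty$, i.e. $0$ lies in a bounded connected component of $\mathbf{C}\setminus\gamma([1,2])$. *)

theory Defs
  imports "HOL-Analysis.Analysis"
begin

definition gamma0 :: "real \<Rightarrow> complex" where
  "gamma0 t =
    (if t \<le> 5/4 then linepath (Complex (-2) 1) (Complex 1 1) (4 * (t - 1))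
     else if t \<le> 3/2 then linepath (Complex 1 1) (Complex 1 (-1)) (4 * (t - 5/4))
     else if t \<le> 7/4 then linepath (Complex 1 (-1)) (Complex (-1) (-1)) (4 * (t - 3/2))
     else linepath (Complex (-1) (-1)) (Complex (-1) 2) (4 * (t - 7/4)))"

end

(*
  Near gamma0, the path gamma runs on the four quarters of [1,2] through the half-planes
  Im z > 1/2, Re z > 1/2, Im z < -1/2 and Re z < -1/2 in turn. Its first quarter crosses the
  rectangle [-3/2,1/2] x [1/2,3/2] from left to right and its last quarter crosses it from
  bottom to top, so by the Fashoda meet theorem gamma s = gamma t for some s <= 5/4 and t >= 7/4.
  The loop gamma|[s,t] visits the four half-planes in clockwise order; a straight-line homotopy
  to a clockwise circle therefore avoids 0, the loop winds -1 times around 0, and 0 cannot lie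
  in the unbounded component of its complement.
*)
theory Submission
  imports Defs "HOL-Complex_Analysis.Winding_Numbers"
begin

lemma path_compose_linepath:
  fixes a b :: real
  assumes "a \<le> b" "continuous_on {a..b} f"
  shows "path (f \<circ> linepath a b)" and "path_image (f \<circ> linepath a b) = f ` {a..b}"
proof -
  show "path (f \<circ> linepath a b)"
    using assms by (intro path_continuous_image) (auto simp: closed_segment_eq_real_ivl)
  show "path_image (f \<circ> linepath a b) = f ` {a..b}"
    using assms by (simp add: path_image_compose closed_segment_eq_real_ivl)
qed

lemma joinpaths_first_half: "x \<le> 1/2 \<Longrightarrow> (p +++ q) x = p (2 * x)"
  by (simp add: joinpaths_def)

lemma joinpaths_second_half:
  "(p +++ q) x = q (2 * x - 1)" if "1/2 \<le> x" "pathfinish p = pathstart q"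
proof (cases "x = 1/2")
  case True
  then have "2 * x = 1" by simp
  with that show ?thesis
    by (simp add: joinpaths_def pathfinish_def pathstart_def)
qed (use that in \<open>simp add: joinpaths_def\<close>)

lemma joinpaths_quarters:
  assumes x: "x \<in> {0..1}"
    and joins: "pathfinish p1 = pathstart p2" "pathfinish p2 = pathstart p3"
      "pathfinish p3 = pathstart p4"
  shows "x \<le> 1/4 \<Longrightarrow> ((p1 +++ p2) +++ (p3 +++ p4)) x \<in> path_image p1"
    and "1/4 \<le> x \<Longrightarrow> x \<le> 1/2 \<Longrightarrow> ((p1 +++ p2) +++ (p3 +++ p4)) x \<in> path_image p2"
    and "1/2 \<le> x \<Longrightarrow> x \<le> 3/4 \<Longrightarrow> ((p1 +++ p2) +++ (p3 +++ p4)) x \<in> path_image p3"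
    and "3/4 \<le> x \<Longrightarrow> ((p1 +++ p2) +++ (p3 +++ p4)) x \<in> path_image p4"
proof -
  have mid: "pathfinish (p1 +++ p2) = pathstart (p3 +++ p4)"
    using joins by simp
  have image: "p y \<in> path_image p" if "y \<in> {0..1}" for p :: "real \<Rightarrow> 'a" and y
    using that by (simp add: path_image_def)
  show "((p1 +++ p2) +++ (p3 +++ p4)) x \<in> path_image p1" if "x \<le> 1/4"
    using x that by (auto simp: joinpaths_first_half intro!: image)
  show "((p1 +++ p2) +++ (p3 +++ p4)) x \<in> path_image p2" if "1/4 \<le> x" "x \<le> 1/2"
    using x that joins by (auto simp: joinpaths_first_half joinpaths_second_half intro!: image)
  show "((p1 +++ p2) +++ (p3 +++ p4)) x \<in> path_image p3" if "1/2 \<le> x" "x \<le> 3/4"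
    using x that mid by (auto simp: joinpaths_first_half joinpaths_second_half intro!: image)
  show "((p1 +++ p2) +++ (p3 +++ p4)) x \<in> path_image p4" if "3/4 \<le> x"
    using x that joins mid by (auto simp: joinpaths_second_half intro!: image)
qed

definition clockwise_circle :: "real \<Rightarrow> complex" where
  "clockwise_circle = shiftpath (5/8) (reversepath (circlepath 0 1))"

lemma clockwise_circle_eq_cis:
  assumes "x \<in> {0..1}"
  shows "clockwise_circle x = cis (3*pi/4 - 2*pi*x)"
proof (cases "5/8 + x \<le> 1")
  case True
  then show ?thesis
    by (simp add: clockwise_circle_def shiftpath_def reversepath_def circlepath_def
        part_circlepath_def linepath_def cis_conv_exp algebra_simps)
next
  case False
  have "clockwise_circle x = cis ((3*pi/4 - 2*pi*x) + 2*pi)"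
    using False by (simp add: clockwise_circle_def shiftpath_def reversepath_def circlepath_def
        part_circlepath_def linepath_def cis_conv_exp algebra_simps)
  also have "\<dots> = cis (3*pi/4 - 2*pi*x)"
    by (simp only: complex_eq_iff cis.sel sin_periodic cos_periodic)
  finally show ?thesis .
qed

lemma path_clockwise_circle: "path clockwise_circle"
  and pathfinish_clockwise_circle: "pathfinish clockwise_circle = pathstart clockwise_circle"
  unfolding clockwise_circle_def by (auto intro: path_shiftpath closed_shiftpath)

lemma winding_number_clockwise_circle: "winding_number clockwise_circle 0 = -1"
proof -
  have "winding_number clockwise_circle 0 = winding_number (reversepath (circlepath 0 1)) 0"
    unfolding clockwise_circle_def by (rule winding_number_shiftpath) auto
  also have "\<dots> = - winding_number (circlepath 0 1) 0"
    by (rule winding_number_reversepath) auto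
  finally show ?thesis
    by (simp add: winding_number_circlepath_centre)
qed

lemma clockwise_circle_quadrants:
  assumes "x \<in> {0..1}"
  shows "x \<le> 1/4 \<Longrightarrow> 0 < Im (clockwise_circle x)"
    and "1/4 \<le> x \<Longrightarrow> x \<le> 1/2 \<Longrightarrow> 0 < Re (clockwise_circle x)"
    and "1/2 \<le> x \<Longrightarrow> x \<le> 3/4 \<Longrightarrow> Im (clockwise_circle x) < 0"
    and "3/4 \<le> x \<Longrightarrow> Re (clockwise_circle x) < 0"
proof -
  have pi_x: "pi * a \<le> pi * x" "pi * x \<le> pi * b" if "a \<le> x" "x \<le> b" for a b
    using that by simp_all
  have x: "0 \<le> x" "x \<le> 1"
    using assms by simp_all
  let ?\<theta> = "3*pi/4 - 2*pi*x"
  have Re: "Re (clockwise_circle x) = cos ?\<theta>" and Im: "Im (clockwise_circle x) = sin ?\<theta>"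
    using assms by (simp_all add: clockwise_circle_eq_cis)
  show "0 < Im (clockwise_circle x)" if "x \<le> 1/4"
    unfolding Im using pi_x[OF x(1) that] pi_gt_zero by (intro sin_gt_zero; linarith)
  show "0 < Re (clockwise_circle x)" if "1/4 \<le> x" "x \<le> 1/2"
    unfolding Re using pi_x[OF that] pi_gt_zero by (intro cos_gt_zero_pi; linarith)
  show "Im (clockwise_circle x) < 0" if "1/2 \<le> x" "x \<le> 3/4"
    unfolding Im using pi_x[OF that] pi_gt_zero sin_minus[of ?\<theta>] sin_gt_zero[of "- ?\<theta>"]
    by linarith
  show "Re (clockwise_circle x) < 0" if "3/4 \<le> x"
    unfolding Re using pi_x[OF that x(2)] pi_gt_zero cos_periodic_pi[of ?\<theta>] cos_gt_zero_pi[of "?\<theta> + pi"]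
    by linarith
qed

lemma winding_number_clockwise_quadrant_loop:
  assumes paths: "path p1" "path p2" "path p3" "path p4"
    and joins: "pathfinish p1 = pathstart p2" "pathfinish p2 = pathstart p3"
      "pathfinish p3 = pathstart p4" "pathfinish p4 = pathstart p1"
    and quadrants: "path_image p1 \<subseteq> {z. 0 < Im z}" "path_image p2 \<subseteq> {z. 0 < Re z}"
      "path_image p3 \<subseteq> {z. Im z < 0}" "path_image p4 \<subseteq> {z. Re z < 0}"
  shows "winding_number ((p1 +++ p2) +++ (p3 +++ p4)) 0 = -1"
proof -
  define P where "P = (p1 +++ p2) +++ (p3 +++ p4)"
  have segment: "0 \<notin> closed_segment (clockwise_circle x) (P x)" if x: "x \<in> {0..1}" for x
  proof -
    note quarters = joinpaths_quarters[OF x joins(1-3), folded P_def]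
    consider "x \<le> 1/4" | "1/4 \<le> x" "x \<le> 1/2" | "1/2 \<le> x" "x \<le> 3/4" | "3/4 \<le> x"
      by linarith
    then have "\<exists>H. convex H \<and> 0 \<notin> H \<and> clockwise_circle x \<in> H \<and> P x \<in> H"
    proof cases
      case 1
      then show ?thesis
        using quadrants(1) quarters(1) clockwise_circle_quadrants(1)[OF x]
        by (intro exI[of _ "{z. 0 < Im z}"]) (auto intro: convex_halfspace_Im_gt)
    next
      case 2
      then show ?thesis
        using quadrants(2) quarters(2) clockwise_circle_quadrants(2)[OF x]
        by (intro exI[of _ "{z. 0 < Re z}"]) (auto intro: convex_halfspace_Re_gt)
    next
      case 3
      then show ?thesis
        using quadrants(3) quarters(3) clockwise_circle_quadrants(3)[OF x]
        by (intro exI[of _ "{z. Im z < 0}"]) (auto intro: convex_halfspace_Im_lt)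
    next
      case 4
      then show ?thesis
        using quadrants(4) quarters(4) clockwise_circle_quadrants(4)[OF x]
        by (intro exI[of _ "{z. Re z < 0}"]) (auto intro: convex_halfspace_Re_lt)
    qed
    then show ?thesis
      by (metis closed_segment_subset subsetD)
  qed
  have "path P" "pathfinish P = pathstart P"
    using paths joins by (simp_all add: P_def)
  then have "winding_number P 0 = winding_number clockwise_circle 0"
    by (intro winding_number_loops_linear_eq[OF path_clockwise_circle _ pathfinish_clockwise_circle _ segment])
  then show ?thesis
    by (simp add: P_def winding_number_clockwise_circle)
qed

lemma bounded_component_if_winding_number_nonzero:
  assumes "path p" "pathfinish p = pathstart p" "path_image p \<subseteq> S" "z \<notin> S"
    and "winding_number p z \<noteq> 0"
  shows "bounded (connected_component_set (- S) z)"
proof -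
  have "z \<notin> outside (path_image p)"
    using assms winding_number_zero_in_outside by blast
  then have "bounded (connected_component_set (- path_image p) z)"
    using assms(3,4) by (auto simp: outside_def)
  moreover have "connected_component_set (- S) z \<subseteq> connected_component_set (- path_image p) z"
    using assms(3) by (intro connected_component_mono) auto
  ultimately show ?thesis
    using bounded_subset by blast
qed

lemma path_pair_cart:
  fixes x y :: "real \<Rightarrow> real"
  assumes "continuous_on {0..1} x" "continuous_on {0..1} y"
  shows "path (\<lambda>t. (\<chi> i. if i = 1 then x t else y t) :: real^2)"
  unfolding path_def
proof (intro continuous_on_vec_lambda)
  show "continuous_on {0..1} (\<lambda>t. if i = 1 then x t else y t)" for i :: 2
    using assms by (cases "i = 1") simp_all
qed

(* Clamping the coordinate that may leave the rectangle [a,b] x [c,d] puts both paths inside it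
   with their ends on opposite sides, as the Fashoda theorem requires; by the strict inequalities
   a meeting point of the clamped paths is one of f and g. *)
lemma crossing_paths_meet:
  fixes f g :: "real \<Rightarrow> complex"
  assumes "path f" "path g"
    and f_ends: "Re (pathstart f) \<le> a" "b \<le> Re (pathfinish f)"
    and f_strip: "\<And>z. z \<in> path_image f \<Longrightarrow> c < Im z \<and> Im z < d"
    and g_ends: "Im (pathstart g) \<le> c" "d \<le> Im (pathfinish g)"
    and g_strip: "\<And>z. z \<in> path_image g \<Longrightarrow> a < Re z \<and> Re z < b"
  shows "path_image f \<inter> path_image g \<noteq> {}"
proof -
  define f' :: "real \<Rightarrow> real^2" where
    "f' = (\<lambda>t. \<chi> i. if i = 1 then max a (min b (Re (f t))) else Im (f t))"
  define g' :: "real \<Rightarrow> real^2" where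
    "g' = (\<lambda>t. \<chi> i. if i = 1 then Re (g t) else max c (min d (Im (g t))))"
  have f: "continuous_on {0..1} f" and g: "continuous_on {0..1} g"
    using assms(1,2) by (simp_all add: path_def)
  have "path f'" "path g'"
    unfolding f'_def g'_def by (intro path_pair_cart continuous_intros f g)+
  have "a < b" "c < d"
    using g_strip[of "g 0"] f_strip[of "f 0"] by (auto simp: path_image_def)
  have two: "(2::2) \<noteq> 1"
    by simp
  obtain w :: "real^2" where w: "w \<in> path_image f'" "w \<in> path_image g'"
  proof (rule fashoda[OF \<open>path f'\<close> \<open>path g'\<close>, of "vector [a, c]" "vector [b, d]"])
    show "path_image f' \<subseteq> cbox (vector [a, c]) (vector [b, d])"
      using f_strip \<open>a < b\<close>
      by (fastforce simp: f'_def path_image_def mem_box_cart forall_2 two)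
    show "path_image g' \<subseteq> cbox (vector [a, c]) (vector [b, d])"
      using g_strip \<open>c < d\<close>
      by (fastforce simp: g'_def path_image_def mem_box_cart forall_2 two)
  qed (use f_ends g_ends \<open>a < b\<close> \<open>c < d\<close> in
        \<open>auto simp: f'_def g'_def pathstart_def pathfinish_def two\<close>)
  then obtain s t where st: "s \<in> {0..1}" "t \<in> {0..1}" and "f' s = g' t"
    unfolding path_image_def by auto
  then have "max a (min b (Re (f s))) = Re (g t)" "Im (f s) = max c (min d (Im (g t)))"
    by (simp_all add: f'_def g'_def vec_eq_iff forall_2 two)
  moreover have "a < Re (g t) \<and> Re (g t) < b" "c < Im (f s) \<and> Im (f s) < d"
    using st g_strip[of "g t"] f_strip[of "f s"] by (auto simp: path_image_def)
  ultimately have "f s = g t"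
    by (simp add: complex_eq_iff max_def min_def split: if_splits)
  then show ?thesis
    using st(1,2) unfolding path_image_def by blast
qed

lemma gamma0_top_edge: "t \<le> 5/4 \<Longrightarrow> gamma0 t = Complex (12 * t - 14) 1"
  by (simp add: gamma0_def linepath_def complex_eq_iff algebra_simps)

lemma gamma0_right_edge: "5/4 \<le> t \<Longrightarrow> t \<le> 3/2 \<Longrightarrow> gamma0 t = Complex 1 (11 - 8 * t)"
  by (cases "t = 5/4") (auto simp: gamma0_def linepath_def complex_eq_iff algebra_simps)

lemma gamma0_bottom_edge: "3/2 \<le> t \<Longrightarrow> t \<le> 7/4 \<Longrightarrow> gamma0 t = Complex (13 - 8 * t) (-1)"
  by (cases "t = 3/2") (auto simp: gamma0_def linepath_def complex_eq_iff algebra_simps)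

lemma gamma0_left_edge: "7/4 \<le> t \<Longrightarrow> gamma0 t = Complex (-1) (12 * t - 22)"
  by (cases "t = 7/4") (auto simp: gamma0_def linepath_def complex_eq_iff algebra_simps)

lemma bounded_gamma0_image: "bounded (gamma0 ` {1..2})"
proof -
  have "\<bar>Re (gamma0 t)\<bar> \<le> 2 \<and> \<bar>Im (gamma0 t)\<bar> \<le> 2" if "t \<in> {1..2}" for t
    using that gamma0_top_edge[of t] gamma0_right_edge[of t] gamma0_bottom_edge[of t]
      gamma0_left_edge[of t]
    by (cases "t \<le> 5/4"; cases "t \<le> 3/2"; cases "t \<le> 7/4") auto
  then have "cmod (gamma0 t) \<le> 4" if "t \<in> {1..2}" for t
    using that cmod_le[of "gamma0 t"] by fastforce
  then show ?thesis
    unfolding bounded_iff by blast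
qed

locale gamma0_perturbation =
  fixes \<gamma> :: "real \<Rightarrow> complex"
  assumes continuous: "continuous_on {1..2} \<gamma>"
    and near: "t \<in> {1..2} \<Longrightarrow> cmod (\<gamma> t - gamma0 t) < 1/2"
begin

lemma Re_Im_near:
  assumes "t \<in> {1..2}"
  shows "\<bar>Re (\<gamma> t) - Re (gamma0 t)\<bar> < 1/2" and "\<bar>Im (\<gamma> t) - Im (gamma0 t)\<bar> < 1/2"
  using near[OF assms] abs_Re_le_cmod[of "\<gamma> t - gamma0 t"] abs_Im_le_cmod[of "\<gamma> t - gamma0 t"]
  by auto

lemma top_edge: "\<gamma> ` {1..5/4} \<subseteq> {z. 1/2 < Im z \<and> Im z < 3/2}"
proof (rule image_subsetI)
  fix t :: real
  assume "t \<in> {1..5/4}"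
  then show "\<gamma> t \<in> {z. 1/2 < Im z \<and> Im z < 3/2}"
    using Re_Im_near[of t] gamma0_top_edge[of t] unfolding abs_less_iff by auto
qed

lemma right_edge: "\<gamma> ` {5/4..3/2} \<subseteq> {z. 1/2 < Re z}"
proof (rule image_subsetI)
  fix t :: real
  assume "t \<in> {5/4..3/2}"
  then show "\<gamma> t \<in> {z. 1/2 < Re z}"
    using Re_Im_near[of t] gamma0_right_edge[of t] unfolding abs_less_iff by auto
qed

lemma bottom_edge: "\<gamma> ` {3/2..7/4} \<subseteq> {z. Im z < -1/2}"
proof (rule image_subsetI)
  fix t :: real
  assume "t \<in> {3/2..7/4}"
  then show "\<gamma> t \<in> {z. Im z < -1/2}"
    using Re_Im_near[of t] gamma0_bottom_edge[of t] unfolding abs_less_iff by auto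
qed

lemma left_edge: "\<gamma> ` {7/4..2} \<subseteq> {z. -3/2 < Re z \<and> Re z < -1/2}"
proof (rule image_subsetI)
  fix t :: real
  assume "t \<in> {7/4..2}"
  then show "\<gamma> t \<in> {z. -3/2 < Re z \<and> Re z < -1/2}"
    using Re_Im_near[of t] gamma0_left_edge[of t] unfolding abs_less_iff by auto
qed

lemma top_edge_ends: "Re (\<gamma> 1) < -3/2" "1/2 < Re (\<gamma> (5/4))"
  using Re_Im_near[of 1] Re_Im_near[of "5/4"] gamma0_top_edge[of 1] gamma0_top_edge[of "5/4"]
  unfolding abs_less_iff by auto

lemma left_edge_ends: "Im (\<gamma> (7/4)) < -1/2" "3/2 < Im (\<gamma> 2)"
  using Re_Im_near[of "7/4"] Re_Im_near[of 2] gamma0_left_edge[of "7/4"] gamma0_left_edge[of 2]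
  unfolding abs_less_iff by auto

lemma zero_notin_image: "0 \<notin> \<gamma> ` {1..2}"
proof
  assume "0 \<in> \<gamma> ` {1..2}"
  then obtain t where t: "t \<in> {1..2}" and "\<gamma> t = 0"
    by auto
  consider "t \<in> {1..5/4}" | "t \<in> {5/4..3/2}" | "t \<in> {3/2..7/4}" | "t \<in> {7/4..2}"
    using t by fastforce
  then show False
    using top_edge right_edge bottom_edge left_edge \<open>\<gamma> t = 0\<close> by cases force+
qed

lemma continuous_on_subinterval: "{a..b} \<subseteq> {1..2} \<Longrightarrow> continuous_on {a..b} \<gamma>"
  using continuous continuous_on_subset by blast

lemma top_edge_meets_left_edge:
  obtains s t where "s \<in> {1..5/4}" "t \<in> {7/4..2}" "\<gamma> s = \<gamma> t"
proof -
  let ?f = "\<gamma> \<circ> linepath 1 (5/4)" and ?g = "\<gamma> \<circ> linepath (7/4) 2"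
  have f: "path ?f" "path_image ?f = \<gamma> ` {1..5/4}"
    and g: "path ?g" "path_image ?g = \<gamma> ` {7/4..2}"
    by (simp_all add: path_compose_linepath continuous_on_subinterval)
  have "path_image ?f \<inter> path_image ?g \<noteq> {}"
  proof (rule crossing_paths_meet[OF f(1) g(1)])
    show "Re (pathstart ?f) \<le> -3/2" "1/2 \<le> Re (pathfinish ?f)"
      using top_edge_ends by (simp_all add: pathstart_compose pathfinish_compose)
    show "Im (pathstart ?g) \<le> 1/2" "3/2 \<le> Im (pathfinish ?g)"
      using left_edge_ends by (simp_all add: pathstart_compose pathfinish_compose)
    show "1/2 < Im z \<and> Im z < 3/2" if "z \<in> path_image ?f" for z
      using that top_edge unfolding f(2) by auto
    show "-3/2 < Re z \<and> Re z < 1/2" if "z \<in> path_image ?g" for z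
      using that left_edge unfolding g(2) by fastforce
  qed
  then show ?thesis
    using that unfolding f(2) g(2) by blast
qed

lemma bounded_component_of_zero: "bounded (connected_component_set (- \<gamma> ` {1..2}) 0)"
proof -
  obtain s t where s: "s \<in> {1..5/4}" and t: "t \<in> {7/4..2}" and "\<gamma> s = \<gamma> t"
    using top_edge_meets_left_edge .
  define p1 where "p1 = \<gamma> \<circ> linepath s (5/4)"
  define p2 where "p2 = \<gamma> \<circ> linepath (5/4) (3/2)"
  define p3 where "p3 = \<gamma> \<circ> linepath (3/2) (7/4)"
  define p4 where "p4 = \<gamma> \<circ> linepath (7/4) t"
  have paths: "path p1" "path p2" "path p3" "path p4"
    and images: "path_image p1 = \<gamma> ` {s..5/4}" "path_image p2 = \<gamma> ` {5/4..3/2}"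
      "path_image p3 = \<gamma> ` {3/2..7/4}" "path_image p4 = \<gamma> ` {7/4..t}"
    using s t unfolding p1_def p2_def p3_def p4_def
    by (simp_all add: path_compose_linepath continuous_on_subinterval)
  have joins: "pathfinish p1 = pathstart p2" "pathfinish p2 = pathstart p3"
    "pathfinish p3 = pathstart p4" "pathfinish p4 = pathstart p1"
    using \<open>\<gamma> s = \<gamma> t\<close> by (simp_all add: p1_def p2_def p3_def p4_def pathstart_compose pathfinish_compose)
  define loop where "loop = (p1 +++ p2) +++ (p3 +++ p4)"
  have "{s..5/4} \<subseteq> {1..5/4}" "{7/4..t} \<subseteq> {7/4..2}"
    using s t by auto
  then have "path_image p1 \<subseteq> {z. 1/2 < Im z \<and> Im z < 3/2}"
    and "path_image p4 \<subseteq> {z. -3/2 < Re z \<and> Re z < -1/2}"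
    unfolding images using top_edge left_edge by (meson image_mono order_trans)+
  moreover have "path_image p2 \<subseteq> {z. 1/2 < Re z}" "path_image p3 \<subseteq> {z. Im z < -1/2}"
    unfolding images by (fact right_edge bottom_edge)+
  ultimately have "winding_number loop 0 = -1"
    unfolding loop_def by (intro winding_number_clockwise_quadrant_loop[OF paths joins]) auto
  moreover have "path loop" "pathfinish loop = pathstart loop"
    using paths joins by (simp_all add: loop_def)
  moreover have "path_image loop = \<gamma> ` ({s..5/4} \<union> {5/4..3/2} \<union> {3/2..7/4} \<union> {7/4..t})"
    using joins by (simp add: loop_def path_image_join images image_Un Un_assoc)
  then have "path_image loop \<subseteq> \<gamma> ` {1..2}"
    using s t by auto
  ultimately show ?thesis
    using zero_notin_image by (intro bounded_component_if_winding_number_nonzero) auto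
qed

end

theorem lemma7p2:
  fixes \<gamma> :: "real \<Rightarrow> complex"
  assumes "continuous_on {1..2} \<gamma>"
    and "(SUP t\<in>{1..2}. cmod (\<gamma> t - gamma0 t)) < 1/2"
  shows "\<exists>C \<in> components (- (\<gamma> ` {1..2})). 0 \<in> C \<and> bounded C"
proof -
  have "bounded (\<gamma> ` {1..2})"
    using assms(1) by (intro compact_imp_bounded compact_continuous_image) auto
  then have "bdd_above ((\<lambda>t. cmod (\<gamma> t - gamma0 t)) ` {1..2})"
    by (intro bounded_imp_bdd_above) (simp add: bounded_norm_comp bounded_minus_comp bounded_gamma0_image)
  then have "cmod (\<gamma> t - gamma0 t) < 1/2" if "t \<in> {1..2}" for t
    using cSUP_upper[OF that] assms(2) by fastforce
  then interpret gamma0_perturbation \<gamma>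
    using assms(1) by unfold_locales
  let ?C = "connected_component_set (- \<gamma> ` {1..2}) 0"
  have "?C \<in> components (- \<gamma> ` {1..2})" "0 \<in> ?C"
    using zero_notin_image by (auto simp: components_def)
  then show ?thesis
    using bounded_component_of_zero by blast
qed

end
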